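(* Let $G$ be a connected graph on $n\ge2$ vertices, $\alpha\in\mathbb{R}$, with vertices labeled so that $({}^\alpha\mathbb{M})_1\ge\cdots\ge({}^\alpha\mathbb{M})_n$. Let $T=\min_{1\le i\ne j\le n}d_{ij}\mathbb{D}_j^\alpha/\mathbb{D}_i^\alpha$. Then \[\rho(\mathbb{D}(G))\ge \frac{({}^\alpha\mathbb{M})_n-T+\sqrt{(({}^\alpha\mathbb{M})_n+T)^2+4T\sum_{k=1}^{n-1}\big(({}^\alpha\mathbb{M})_k-({}^\alpha\mathbb{M})_n\big)}}{2}.\] Equality holds if and only if $({}^\alpha\mathbb{M})_1=\cdots=({}^\alpha\mathbb{M})_n$, or for some $2\le t\le n$: (i) $d_{kl}\mathbb{D}_l^\alpha/\mathbb{D}_k^\alpha=T$ for all $1\le k\le n$, $1\le l\le t-1$, $k\ne l$; (ii) $({}^\alpha\mathbb{M})_t=\cdots=({}^\alpha\mathbb{M})_n$.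
   Context: $\mathbb{D}(G)=(d_{ij})$ is the distance matrix of $G$, $\mathbb{D}_i=\sum_j d_{ij}$ the transmission of $v_i$, and $({}^\alpha\mathbb{M})_i=\frac{\sum_{j=1}^n d_{ij}\mathbb{D}_j^\alpha}{\mathbb{D}_i^\alpha}$ the generalized average transmission. $\rho$ is the spectral radius. *)

theory Defs
  imports Complex_Main "Jordan_Normal_Form.Spectral_Radius"
begin

definition simple_graph :: "nat \<Rightarrow> (nat \<Rightarrow> nat \<Rightarrow> bool) \<Rightarrow> bool" where
  "simple_graph n E \<longleftrightarrow> (\<forall>i j. E i j \<longrightarrow> i < n \<and> j < n) \<and>
     (\<forall>i j. E i j \<longrightarrow> E j i) \<and> (\<forall>i. \<not> E i i)"

definition is_walk :: "nat \<Rightarrow> (nat \<Rightarrow> nat \<Rightarrow> bool) \<Rightarrow> nat list \<Rightarrow> bool" where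
  "is_walk n E p \<longleftrightarrow> p \<noteq> [] \<and> (\<forall>v\<in>set p. v < n) \<and>
     (\<forall>k. Suc k < length p \<longrightarrow> E (p ! k) (p ! Suc k))"

definition connected_graph :: "nat \<Rightarrow> (nat \<Rightarrow> nat \<Rightarrow> bool) \<Rightarrow> bool" where
  "connected_graph n E \<longleftrightarrow> simple_graph n E \<and>
     (\<forall>i<n. \<forall>j<n. \<exists>p. is_walk n E p \<and> hd p = i \<and> last p = j)"

definition gdist :: "nat \<Rightarrow> (nat \<Rightarrow> nat \<Rightarrow> bool) \<Rightarrow> nat \<Rightarrow> nat \<Rightarrow> nat" where
  "gdist n E i j = (LEAST k. \<exists>p. is_walk n E p \<and> hd p = i \<and> last p = j \<and> length p = Suc k)"

definition dist_matrix :: "nat \<Rightarrow> (nat \<Rightarrow> nat \<Rightarrow> bool) \<Rightarrow> real mat" where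
  "dist_matrix n E = mat n n (\<lambda>(i, j). real (gdist n E i j))"

definition transmission :: "nat \<Rightarrow> (nat \<Rightarrow> nat \<Rightarrow> bool) \<Rightarrow> nat \<Rightarrow> real" where
  "transmission n E i = (\<Sum>j<n. real (gdist n E i j))"

definition gen_avg_trans :: "nat \<Rightarrow> (nat \<Rightarrow> nat \<Rightarrow> bool) \<Rightarrow> real \<Rightarrow> nat \<Rightarrow> real" where
  "gen_avg_trans n E \<alpha> i =
     (\<Sum>j<n. real (gdist n E i j) * transmission n E j powr \<alpha>) / transmission n E i powr \<alpha>"

definition dist_spectral_radius :: "nat \<Rightarrow> (nat \<Rightarrow> nat \<Rightarrow> bool) \<Rightarrow> real" where
  "dist_spectral_radius n E = spectral_radius (map_mat complex_of_real (dist_matrix n E))"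

end

theory Submission
  imports Defs
begin

(* Write w_i = D_i^alpha and r_ij = d_ij w_j / w_i, so that M_i = sum_j r_ij is the i-th row sum
   of the diagonally similar matrix W^-1 D W, and T is the least off-diagonal r_ij.  With
   m = M_(n-1) (vertices are numbered 0..n-1), v_k = M_k - m >= 0 and B the positive root of
   (m - x)(x + T) + T sum_k v_k = 0, the test vector z_k = 1 + v_k/(B + T) satisfies
   sum_j r_ij z_j = B z_i + e_i/(B + T), where the excess e_i = sum_(j<>i) (r_ij - T) v_j is
   nonnegative.  Hence y = w z > 0 satisfies D y = B y + (nonnegative), and a Collatz-Wielandt
   argument gives rho(D) >= B, with equality iff every excess vanishes; this last condition is
   finally rewritten into the form stated in the theorem. *)

lemma mult_mat_vec_index_sum:
  assumes "A \<in> carrier_mat n n" "v \<in> carrier_vec n" "i < n"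
  shows "(A *\<^sub>v v) $ i = (\<Sum>j<n. A $$ (i, j) * v $ j)"
  using assms by (auto simp: scalar_prod_def atLeast0LessThan intro!: sum.cong)

text \<open>Collatz-Wielandt upper bound: a positive vector y with A y \<le> \<lambda> y forces \<rho>(A) \<le> \<lambda>.
  One compares any eigenvector v with y at the index maximizing |v_i|/y_i.\<close>
lemma spectral_radius_le_of_subinvariant:
  fixes A :: "real mat"
  assumes A: "A \<in> carrier_mat n n" and n: "n > 0" and nn: "\<forall>i<n. \<forall>j<n. A $$ (i, j) \<ge> 0"
    and y: "\<forall>i<n. y i > 0" and le: "\<forall>i<n. (\<Sum>j<n. A $$ (i, j) * y j) \<le> lam * y i"
  shows "spectral_radius (map_mat complex_of_real A) \<le> lam"
proof -
  let ?C = "map_mat complex_of_real A"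
  have C: "?C \<in> carrier_mat n n" using A by auto
  from spectral_radius_mem_max(1)[OF C n] obtain e where e: "e \<in> spectrum ?C"
    and re: "spectral_radius ?C = norm e" by auto
  from e obtain v where "eigenvector ?C v e" unfolding spectrum_def eigenvalue_def by auto
  hence v: "v \<in> carrier_vec n" and v0: "v \<noteq> 0\<^sub>v n" and eq: "?C *\<^sub>v v = e \<cdot>\<^sub>v v"
    using C unfolding eigenvector_def by auto
  have comp: "e * v $ i = (\<Sum>j<n. complex_of_real (A $$ (i, j)) * v $ j)" if "i < n" for i
  proof -
    have "(?C *\<^sub>v v) $ i = (e \<cdot>\<^sub>v v) $ i" using eq by simp
    thus ?thesis using mult_mat_vec_index_sum[OF C v that] that v A by auto
  qed
  define f where "f j = norm (v $ j) / y j" for j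
  have fin: "finite (f ` {..<n})" and ne: "f ` {..<n} \<noteq> {}" using n by auto
  obtain i where i: "i < n" "f i = Max (f ` {..<n})" using Max_in[OF fin ne] by auto
  have fle: "f j \<le> f i" if "j < n" for j using i Max_ge[OF fin] that by auto
  obtain j where j: "j < n" "v $ j \<noteq> 0" using v v0 by (metis eq_vecI carrier_vecD index_zero_vec)
  have fi: "f i > 0" using fle[OF j(1)] j y unfolding f_def by (smt (verit) divide_pos_pos zero_less_norm_iff)
  have nvi: "norm (v $ i) = f i * y i" using y i(1) unfolding f_def by auto
  have "norm e * norm (v $ i) = norm (\<Sum>j<n. complex_of_real (A $$ (i, j)) * v $ j)"
    using comp[OF i(1)] by (metis norm_mult)
  also have "\<dots> \<le> (\<Sum>j<n. norm (complex_of_real (A $$ (i, j)) * v $ j))" by (rule norm_sum)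
  also have "\<dots> = (\<Sum>j<n. A $$ (i, j) * (f j * y j))"
    using nn i y by (intro sum.cong) (auto simp: norm_mult f_def)
  also have "\<dots> \<le> (\<Sum>j<n. A $$ (i, j) * (f i * y j))"
    using nn i y fle by (intro sum_mono mult_left_mono mult_right_mono) (auto simp: less_imp_le)
  also have "\<dots> = f i * (\<Sum>j<n. A $$ (i, j) * y j)" by (simp add: sum_distrib_left algebra_simps)
  also have "\<dots> \<le> f i * (lam * y i)" using le i fi by (intro mult_left_mono) auto
  also have "\<dots> = lam * norm (v $ i)" using nvi by simp
  finally have "norm e * norm (v $ i) \<le> lam * norm (v $ i)" .
  moreover have "norm (v $ i) > 0" using nvi fi y i by auto
  ultimately show ?thesis using re by simp
qed

lemma nonneg_mat_pow_nonneg: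
  fixes A :: "real mat"
  assumes A: "A \<in> carrier_mat n n" and nn: "\<forall>i<n. \<forall>j<n. A $$ (i, j) \<ge> 0"
  shows "\<forall>i<n. \<forall>j<n. (A ^\<^sub>m k) $$ (i, j) \<ge> 0"
proof (induction k)
  case 0
  then show ?case using A by auto
next
  case (Suc k)
  have P: "A ^\<^sub>m k \<in> carrier_mat n n" using A by auto
  have "(A ^\<^sub>m Suc k) $$ (i, j) = (\<Sum>l<n. (A ^\<^sub>m k) $$ (i, l) * A $$ (l, j))"
    if "i < n" "j < n" for i j
    using P A that by (auto simp: scalar_prod_def atLeast0LessThan intro!: sum.cong)
  then show ?case using Suc nn by (auto intro!: sum_nonneg)
qed

lemma nonneg_mat_mult_vec_mono:
  fixes A :: "real mat"
  assumes A: "A \<in> carrier_mat n n" and nn: "\<forall>i<n. \<forall>j<n. A $$ (i, j) \<ge> 0"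
    and u: "u \<in> carrier_vec n" and w: "w \<in> carrier_vec n" and le: "\<forall>i<n. u $ i \<le> w $ i"
    and i: "i < n"
  shows "(A *\<^sub>v u) $ i \<le> (A *\<^sub>v w) $ i"
  unfolding mult_mat_vec_index_sum[OF A u i] mult_mat_vec_index_sum[OF A w i]
  using i le nn by (intro sum_mono mult_left_mono) auto

lemma superinvariant_pow_growth:
  fixes A :: "real mat"
  assumes A: "A \<in> carrier_mat n n" and nn: "\<forall>i<n. \<forall>j<n. A $$ (i, j) \<ge> 0"
    and y: "y \<in> carrier_vec n" and c0: "c \<ge> 0"
    and ge: "\<forall>i<n. c * y $ i \<le> (A *\<^sub>v y) $ i"
  shows "\<forall>i<n. c ^ k * y $ i \<le> (A ^\<^sub>m k *\<^sub>v y) $ i"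
proof (induction k)
  case 0
  then show ?case using A y by auto
next
  case (Suc k)
  have P: "A ^\<^sub>m k \<in> carrier_mat n n" using A by auto
  have Pn: "\<forall>i<n. \<forall>j<n. (A ^\<^sub>m k) $$ (i, j) \<ge> 0" by (rule nonneg_mat_pow_nonneg[OF A nn])
  show ?case
  proof (intro allI impI)
    fix i assume i: "i < n"
    have "c ^ Suc k * y $ i = c * (c ^ k * y $ i)" by simp
    also have "\<dots> \<le> c * (A ^\<^sub>m k *\<^sub>v y) $ i" using Suc i c0 by (intro mult_left_mono) auto
    also have "\<dots> = (A ^\<^sub>m k *\<^sub>v (c \<cdot>\<^sub>v y)) $ i" using P A y i by (simp add: mult_mat_vec[OF P y])
    also have "\<dots> \<le> (A ^\<^sub>m k *\<^sub>v (A *\<^sub>v y)) $ i"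
      using ge y A i by (intro nonneg_mat_mult_vec_mono[OF P Pn]) auto
    also have "\<dots> = (A ^\<^sub>m Suc k *\<^sub>v y) $ i" using P A y by (simp add: assoc_mult_mat_vec[OF P A y])
    finally show "c ^ Suc k * y $ i \<le> (A ^\<^sub>m Suc k *\<^sub>v y) $ i" .
  qed
qed

lemma spectral_radius_smult_le:
  fixes C :: "complex mat"
  assumes C: "C \<in> carrier_mat n n" and n: "n > 0" and c: "c > 0"
  shows "spectral_radius (complex_of_real c \<cdot>\<^sub>m C) \<le> c * spectral_radius C"
proof -
  let ?cC = "complex_of_real c \<cdot>\<^sub>m C"
  have cC: "?cC \<in> carrier_mat n n" using C by simp
  from spectral_radius_mem_max(1)[OF cC n] obtain e where e: "e \<in> spectrum ?cC"
    and re: "spectral_radius ?cC = norm e" by auto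
  from e obtain v where "eigenvector ?cC v e" unfolding spectrum_def eigenvalue_def by auto
  hence v: "v \<in> carrier_vec n" "v \<noteq> 0\<^sub>v n" and eq: "?cC *\<^sub>v v = e \<cdot>\<^sub>v v"
    using C unfolding eigenvector_def by auto
  have "C *\<^sub>v v = (e / complex_of_real c) \<cdot>\<^sub>v v"
  proof (rule eq_vecI)
    fix i assume "i < dim_vec ((e / complex_of_real c) \<cdot>\<^sub>v v)"
    hence i: "i < n" using v by simp
    have "complex_of_real c * (C *\<^sub>v v) $ i = e * v $ i"
      using arg_cong[OF eq, of "\<lambda>u. u $ i"] C v i by simp
    thus "(C *\<^sub>v v) $ i = ((e / complex_of_real c) \<cdot>\<^sub>v v) $ i"
      using c i v by (simp add: field_simps)
  qed (use C v in simp)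
  hence "eigenvector C v (e / complex_of_real c)" using C v unfolding eigenvector_def by simp
  hence "norm (e / complex_of_real c) \<le> spectral_radius C"
    by (intro spectral_radius_mem_max(2)[OF C n] imageI) (auto simp: spectrum_def eigenvalue_def)
  thus ?thesis using re c by (simp add: norm_divide field_simps)
qed

lemma real_mat_powers_bounded:
  fixes A :: "real mat"
  assumes A: "A \<in> carrier_mat n n" and sr: "spectral_radius (map_mat complex_of_real A) < 1"
  obtains c where "\<And>k i j. i < n \<Longrightarrow> j < n \<Longrightarrow> (A ^\<^sub>m k) $$ (i, j) \<le> c"
proof -
  have C: "map_mat complex_of_real A \<in> carrier_mat n n" using A by simp
  from spectral_radius_jnf_norm_bound_less_1_upper_triangular[OF C sr]
  obtain c where c: "\<And>k. norm_bound (map_mat complex_of_real A ^\<^sub>m k) c" by auto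
  have "(A ^\<^sub>m k) $$ (i, j) \<le> c" if "i < n" "j < n" for k i j
  proof -
    have "map_mat complex_of_real A ^\<^sub>m k = map_mat complex_of_real (A ^\<^sub>m k)"
      by (rule of_real_hom.mat_hom_pow[OF A, symmetric])
    with c[of k] that A have "norm (complex_of_real ((A ^\<^sub>m k) $$ (i, j))) \<le> c"
      unfolding norm_bound_def by auto
    thus ?thesis by simp
  qed
  thus ?thesis using that by blast
qed

text \<open>A nonnegative matrix expanding a positive vector by a factor q > 1 has spectral radius \<ge> 1:
  otherwise its powers would be bounded while A^k y \<ge> q^k y grows without bound.\<close>
lemma spectral_radius_ge_1_of_expansion:
  fixes A :: "real mat"
  assumes A: "A \<in> carrier_mat n n" and n: "n > 0" and nn: "\<forall>i<n. \<forall>j<n. A $$ (i, j) \<ge> 0"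
    and y: "\<forall>i<n. y i > 0" and q: "q > 1"
    and ge: "\<forall>i<n. q * y i \<le> (\<Sum>j<n. A $$ (i, j) * y j)"
  shows "1 \<le> spectral_radius (map_mat complex_of_real A)"
proof (rule ccontr)
  assume "\<not> ?thesis"
  then obtain c where bnd: "\<And>k i j. i < n \<Longrightarrow> j < n \<Longrightarrow> (A ^\<^sub>m k) $$ (i, j) \<le> c"
    using real_mat_powers_bounded[OF A] by force
  let ?y = "vec n y"
  have ge': "\<forall>i<n. q * ?y $ i \<le> (A *\<^sub>v ?y) $ i"
    using ge by (simp add: mult_mat_vec_index_sum[OF A])
  have up: "q ^ k * y 0 \<le> c * (\<Sum>j<n. y j)" for k
  proof -
    have P: "A ^\<^sub>m k \<in> carrier_mat n n" using A by auto
    have "q ^ k * y 0 \<le> (A ^\<^sub>m k *\<^sub>v ?y) $ 0"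
      using superinvariant_pow_growth[OF A nn _ _ ge', of k] q n by simp
    also have "\<dots> = (\<Sum>j<n. (A ^\<^sub>m k) $$ (0, j) * y j)" using mult_mat_vec_index_sum[OF P _ n] by simp
    also have "\<dots> \<le> (\<Sum>j<n. c * y j)" using bnd n y
      by (intro sum_mono mult_right_mono) (auto simp: less_imp_le)
    finally show ?thesis by (simp add: sum_distrib_left)
  qed
  obtain k where "c * (\<Sum>j<n. y j) / y 0 < q ^ k" using real_arch_pow[OF q] by blast
  hence "c * (\<Sum>j<n. y j) < q ^ k * y 0" using y n by (simp add: divide_less_eq)
  with up[of k] show False by simp
qed

lemma spectral_radius_ge_of_superinvariant:
  fixes A :: "real mat"
  assumes A: "A \<in> carrier_mat n n" and n: "n > 0" and nn: "\<forall>i<n. \<forall>j<n. A $$ (i, j) \<ge> 0"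
    and y: "\<forall>i<n. y i > 0" and ge: "\<forall>i<n. lam * y i \<le> (\<Sum>j<n. A $$ (i, j) * y j)"
  shows "lam \<le> spectral_radius (map_mat complex_of_real A)"
proof (rule ccontr)
  let ?rho = "spectral_radius (map_mat complex_of_real A)"
  assume "\<not> lam \<le> ?rho"
  moreover have "?rho \<ge> 0"
    using spectral_radius_mem_max(1)[of "map_mat complex_of_real A" n] A n by auto
  ultimately obtain mu where mu: "0 < mu" "?rho < mu" "mu < lam"
    by (metis dense le_less_trans not_le)
  define A' where "A' = (1 / mu) \<cdot>\<^sub>m A"
  have A': "A' \<in> carrier_mat n n" using A unfolding A'_def by auto
  have A'e: "A' $$ (i, j) = A $$ (i, j) / mu" if "i < n" "j < n" for i j
    using A that unfolding A'_def by auto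
  have "map_mat complex_of_real A' = complex_of_real (1 / mu) \<cdot>\<^sub>m map_mat complex_of_real A"
    using A unfolding A'_def by (intro eq_matI) auto
  hence "spectral_radius (map_mat complex_of_real A') \<le> (1 / mu) * ?rho"
    using spectral_radius_smult_le[of "map_mat complex_of_real A" n "1 / mu"] A n mu by simp
  also have "\<dots> < 1" using mu by (simp add: field_simps)
  finally have lt1: "spectral_radius (map_mat complex_of_real A') < 1" .
  have "\<forall>i<n. (lam / mu) * y i \<le> (\<Sum>j<n. A' $$ (i, j) * y j)"
    using ge mu A'e by (auto simp: sum_divide_distrib[symmetric] divide_right_mono)
  from spectral_radius_ge_1_of_expansion[OF A' n _ y _ this] lt1 mu nn A'e
  show False by (simp add: field_simps)
qed

lemma spectral_radius_gt_of_strict_superinvariant: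
  fixes A :: "real mat"
  assumes A: "A \<in> carrier_mat n n" and n: "n > 0" and nn: "\<forall>i<n. \<forall>j<n. A $$ (i, j) \<ge> 0"
    and y: "\<forall>i<n. y i > 0" and gt: "\<forall>i<n. lam * y i < (\<Sum>j<n. A $$ (i, j) * y j)"
  shows "lam < spectral_radius (map_mat complex_of_real A)"
proof -
  define g where "g i = ((\<Sum>j<n. A $$ (i, j) * y j) - lam * y i) / y i" for i
  define d where "d = Min (g ` {..<n})"
  have fin: "finite (g ` {..<n})" and ne: "g ` {..<n} \<noteq> {}" using n by auto
  obtain i where "i < n" "d = g i" using Min_in[OF fin ne] unfolding d_def by auto
  hence d0: "d > 0" using gt y unfolding g_def by auto
  have "(lam + d) * y i \<le> (\<Sum>j<n. A $$ (i, j) * y j)" if i: "i < n" for i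
  proof -
    have "d * y i \<le> g i * y i" using Min_le[OF fin] y i unfolding d_def by (intro mult_right_mono) auto
    also have "g i * y i = (\<Sum>j<n. A $$ (i, j) * y j) - lam * y i" using y i unfolding g_def by auto
    finally show ?thesis by (simp add: algebra_simps)
  qed
  with spectral_radius_ge_of_superinvariant[OF A n nn y] d0 show ?thesis by force
qed

text \<open>If all off-diagonal entries are positive, strictness in a single row already suffices:
  enlarging y slightly at that row makes every row strict.\<close>
lemma spectral_radius_gt_of_superinvariant_one_strict:
  fixes A :: "real mat"
  assumes A: "A \<in> carrier_mat n n" and n: "n > 0" and nn: "\<forall>i<n. \<forall>j<n. A $$ (i, j) \<ge> 0"
    and pos: "\<forall>i<n. \<forall>j<n. i \<noteq> j \<longrightarrow> A $$ (i, j) > 0"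
    and y: "\<forall>i<n. y i > 0" and ge: "\<forall>i<n. lam * y i \<le> (\<Sum>j<n. A $$ (i, j) * y j)"
    and i0: "i0 < n" and gt: "lam * y i0 < (\<Sum>j<n. A $$ (i0, j) * y j)"
  shows "lam < spectral_radius (map_mat complex_of_real A)"
proof -
  define g where "g = (\<Sum>j<n. A $$ (i0, j) * y j) - lam * y i0"
  define eps where "eps = g / (2 * (\<bar>lam\<bar> + 1))"
  have g: "g > 0" using gt unfolding g_def by simp
  have eps: "eps > 0" "lam * eps < g"
  proof -
    show "eps > 0" using g unfolding eps_def by auto
    have "\<bar>lam\<bar> * eps = g * (\<bar>lam\<bar> / (2 * (\<bar>lam\<bar> + 1)))" unfolding eps_def by simp
    also have "\<dots> < g * 1" using g by (intro mult_strict_left_mono) auto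
    finally show "lam * eps < g" using \<open>eps > 0\<close> by (smt (verit) abs_ge_self mult_right_mono)
  qed
  define y' where "y' j = y j + (if j = i0 then eps else 0)" for j
  have y': "\<forall>i<n. y' i > 0" using y eps unfolding y'_def by auto
  have sum': "(\<Sum>j<n. A $$ (i, j) * y' j) = (\<Sum>j<n. A $$ (i, j) * y j) + A $$ (i, i0) * eps" for i
  proof -
    have "(\<Sum>j<n. A $$ (i, j) * y' j)
        = (\<Sum>j<n. A $$ (i, j) * y j + (if j = i0 then A $$ (i, j) * eps else 0))"
      unfolding y'_def by (intro sum.cong) (auto simp: distrib_left)
    thus ?thesis using i0 by (simp add: sum.distrib)
  qed
  have "lam * y' i < (\<Sum>j<n. A $$ (i, j) * y' j)" if i: "i < n" for i
  proof (cases "i = i0")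
    case True
    have "lam * y' i = lam * y i0 + lam * eps" using True unfolding y'_def by (simp add: algebra_simps)
    also have "\<dots> < (\<Sum>j<n. A $$ (i0, j) * y j)" using eps(2) unfolding g_def by simp
    also have "\<dots> \<le> (\<Sum>j<n. A $$ (i, j) * y' j)" using sum'[of i] True nn i eps by simp
    finally show ?thesis .
  next
    case False
    have "lam * y' i \<le> (\<Sum>j<n. A $$ (i, j) * y j)" using False ge i unfolding y'_def by simp
    also have "\<dots> < (\<Sum>j<n. A $$ (i, j) * y' j)" using sum'[of i] pos i i0 False eps by simp
    finally show ?thesis .
  qed
  with spectral_radius_gt_of_strict_superinvariant[OF A n nn y'] show ?thesis by blast
qed

lemma spectral_radius_of_nonneg_excess:
  fixes A :: "real mat"
  assumes A: "A \<in> carrier_mat n n" and n: "n > 0" and nn: "\<forall>i<n. \<forall>j<n. A $$ (i, j) \<ge> 0"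
    and pos: "\<forall>i<n. \<forall>j<n. i \<noteq> j \<longrightarrow> A $$ (i, j) > 0" and y: "\<forall>i<n. y i > 0"
    and row: "\<forall>i<n. (\<Sum>j<n. A $$ (i, j) * y j) = lam * y i + e i" and e: "\<forall>i<n. e i \<ge> 0"
  shows "lam \<le> spectral_radius (map_mat complex_of_real A) \<and>
    (spectral_radius (map_mat complex_of_real A) = lam \<longleftrightarrow> (\<forall>i<n. e i = 0))"
proof -
  have ge: "\<forall>i<n. lam * y i \<le> (\<Sum>j<n. A $$ (i, j) * y j)" using row e by simp
  note lower = spectral_radius_ge_of_superinvariant[OF A n nn y ge]
  have upper: "spectral_radius (map_mat complex_of_real A) \<le> lam" if zero: "\<forall>i<n. e i = 0"
  proof (rule spectral_radius_le_of_subinvariant[OF A n nn y])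
    show "\<forall>i<n. (\<Sum>j<n. A $$ (i, j) * y j) \<le> lam * y i" using row zero by simp
  qed
  have strict: "lam < spectral_radius (map_mat complex_of_real A)" if i0: "i0 < n" "e i0 \<noteq> 0" for i0
  proof -
    have "e i0 > 0" using e i0 by (simp add: order.not_eq_order_implies_strict)
    hence "lam * y i0 < (\<Sum>j<n. A $$ (i0, j) * y j)" using row i0 by simp
    from spectral_radius_gt_of_superinvariant_one_strict[OF A n nn pos y ge i0(1) this]
    show ?thesis .
  qed
  show ?thesis
  proof (intro conjI iffI lower)
    assume "spectral_radius (map_mat complex_of_real A) = lam"
    thus "\<forall>i<n. e i = 0" using strict by force
  qed (use upper lower in simp)
qed

lemma row_sum_pos:
  fixes r :: "nat \<Rightarrow> nat \<Rightarrow> real"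
  assumes n2: "n \<ge> 2" and diag: "r i i = 0" and pos: "\<forall>j<n. j \<noteq> i \<longrightarrow> r i j > 0"
  shows "(\<Sum>j<n. r i j) > 0"
proof -
  define j where "j = (if i = 0 then 1 else 0 :: nat)"
  have j: "j < n" "j \<noteq> i" using n2 unfolding j_def by auto
  have "0 < r i j" using pos j by simp
  also have "\<dots> \<le> (\<Sum>j<n. r i j)"
    using pos diag j by (intro member_le_sum) (auto simp: order.order_iff_strict)
  finally show ?thesis .
qed

lemma gdist_self:
  assumes "i < n" shows "gdist n E i i = 0"
proof -
  have "is_walk n E [i]" using assms unfolding is_walk_def by auto
  thus ?thesis unfolding gdist_def by (intro Least_eq_0 exI[of _ "[i]"]) simp
qed

lemma gdist_ge_1:
  assumes conn: "connected_graph n E" and ij: "i < n" "j < n" "i \<noteq> j"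
  shows "gdist n E i j \<ge> 1"
proof -
  obtain p where p: "is_walk n E p" "hd p = i" "last p = j"
    using conn ij unfolding connected_graph_def by blast
  hence "\<exists>k p. is_walk n E p \<and> hd p = i \<and> last p = j \<and> length p = Suc k"
    by (intro exI[of _ "length p - 1"] exI[of _ p]) (auto simp: is_walk_def)
  from LeastI_ex[OF this] obtain q where q: "hd q = i" "last q = j"
    "length q = Suc (gdist n E i j)" unfolding gdist_def by blast
  show ?thesis
  proof (rule ccontr)
    assume "\<not> 1 \<le> gdist n E i j"
    hence "length q = 1" using q by simp
    then obtain a where "q = [a]" by (cases q) auto
    thus False using q ij by simp
  qed
qed

lemma transmission_pos:
  assumes conn: "connected_graph n E" and n2: "n \<ge> 2" and i: "i < n"
  shows "transmission n E i > 0"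
  unfolding transmission_def using gdist_self[OF i] gdist_ge_1[OF conn i]
  by (intro row_sum_pos[OF n2, where r = "\<lambda>i j. real (gdist n E i j)"]) (auto simp: Suc_le_eq)

lemma offdiag_min:
  fixes r :: "nat \<Rightarrow> nat \<Rightarrow> real"
  assumes n2: "n \<ge> 2" and pos: "\<forall>i<n. \<forall>j<n. i \<noteq> j \<longrightarrow> r i j > 0"
  defines "T \<equiv> Min {r i j | i j. i < n \<and> j < n \<and> i \<noteq> j}"
  shows "T > 0" and "\<forall>i<n. \<forall>j<n. i \<noteq> j \<longrightarrow> T \<le> r i j"
proof -
  let ?R = "{r i j | i j. i < n \<and> j < n \<and> i \<noteq> j}"
  have "?R \<subseteq> (\<lambda>(i, j). r i j) ` ({..<n} \<times> {..<n})" by force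
  hence fin: "finite ?R" by (rule finite_subset) auto
  have "r 0 1 \<in> ?R" using n2 by force
  hence "T \<in> ?R" unfolding T_def using Min_in[OF fin] by blast
  thus "T > 0" using pos by blast
  show "\<forall>i<n. \<forall>j<n. i \<noteq> j \<longrightarrow> T \<le> r i j" unfolding T_def using fin by (auto intro: Min_le)
qed

lemma quadratic_bound_root:
  fixes m T S :: real
  assumes m: "m > 0" and T: "T > 0" and S: "S \<ge> 0"
  defines "B \<equiv> (m - T + sqrt ((m + T)\<^sup>2 + 4 * T * S)) / 2"
  shows "B + T > 0" and "(m - B) * (B + T) + T * S = 0"
proof -
  define q where "q = sqrt ((m + T)\<^sup>2 + 4 * T * S)"
  have rad: "0 \<le> (m + T)\<^sup>2 + 4 * T * S" using T S by simp
  have q0: "q \<ge> 0" and q2: "q\<^sup>2 = (m + T)\<^sup>2 + 4 * T * S" unfolding q_def using rad by simp_all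
  have B: "B = (m - T + q) / 2" unfolding B_def q_def ..
  show "B + T > 0" unfolding B using q0 m T by (simp add: field_simps)
  have "(m - B) * (B + T) = ((m + T)\<^sup>2 - q\<^sup>2) / 4" unfolding B by (simp add: power2_eq_square field_simps)
  thus "(m - B) * (B + T) + T * S = 0" using q2 by simp
qed

lemma test_vector_identity:
  fixes r :: "nat \<Rightarrow> nat \<Rightarrow> real" and M :: "nat \<Rightarrow> real"
  assumes i: "i < n" and diag: "r i i = 0" and M: "M i = (\<Sum>j<n. r i j)"
    and root: "(m - B) * (B + T) + T * (\<Sum>k<n. M k - m) = 0" and BT: "B + T \<noteq> 0"
  defines "z \<equiv> \<lambda>k. 1 + (M k - m) / (B + T)"
  shows "(\<Sum>j<n. r i j * z j) = B * z i + (\<Sum>j\<in>{..<n} - {i}. (r i j - T) * (M j - m)) / (B + T)"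
proof -
  define v where "v k = M k - m" for k
  define S where "S = (\<Sum>k<n. v k)"
  define e where "e = (\<Sum>j\<in>{..<n} - {i}. (r i j - T) * v j)"
  have split: "(\<Sum>j<n. f j) = f i + (\<Sum>j\<in>{..<n} - {i}. f j)" for f :: "nat \<Rightarrow> real"
    using i by (simp add: sum.remove)
  have rv: "(\<Sum>j<n. r i j * v j) = e + T * (S - v i)"
    unfolding e_def S_def split[of "\<lambda>j. r i j * v j"] split[of v] using diag
    by (simp add: algebra_simps sum.distrib sum_distrib_left sum_subtractf)
  define K where "K = B + T"
  have key: "M i * K + T * (S - v i) = B * K + B * v i"
    using root unfolding S_def v_def K_def by (simp add: algebra_simps)
  have "(\<Sum>j<n. r i j * z j) = M i + (\<Sum>j<n. r i j * v j) / K"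
    unfolding z_def v_def M K_def by (simp add: distrib_left sum.distrib sum_divide_distrib)
  also have "\<dots> = M i + (e + T * (S - v i)) / K" by (simp only: rv)
  also have "\<dots> = B * (1 + v i / K) + e / K"
    using key BT unfolding K_def[symmetric] by (simp add: field_simps)
  finally show ?thesis unfolding z_def e_def v_def K_def .
qed

lemma diagonal_rescaling_row:
  fixes A :: "real mat" and w z :: "nat \<Rightarrow> real" and r :: "nat \<Rightarrow> nat \<Rightarrow> real"
  assumes w: "w i \<noteq> 0" and r: "\<And>j. j < n \<Longrightarrow> r i j = A $$ (i, j) * w j / w i"
    and rz: "(\<Sum>j<n. r i j * z j) = B * z i + x"
  shows "(\<Sum>j<n. A $$ (i, j) * (w j * z j)) = B * (w i * z i) + w i * x"
proof -
  have "(\<Sum>j<n. A $$ (i, j) * (w j * z j)) = w i * (\<Sum>j<n. r i j * z j)"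
    unfolding sum_distrib_left using r w by (intro sum.cong) auto
  also have "\<dots> = B * (w i * z i) + w i * x" unfolding rz by (simp add: algebra_simps)
  finally show ?thesis .
qed

text \<open>The vector
  y_k = w_k z_k built from the test vector z satisfies A y = B y + e with e \<ge> 0.\<close>
lemma weighted_row_sum_spectral_bound:
  fixes A :: "real mat" and w M :: "nat \<Rightarrow> real" and r :: "nat \<Rightarrow> nat \<Rightarrow> real"
  assumes A: "A \<in> carrier_mat n n" and n2: "n \<ge> 2"
    and diag: "\<forall>i<n. A $$ (i, i) = 0" and pos: "\<forall>i<n. \<forall>j<n. i \<noteq> j \<longrightarrow> A $$ (i, j) > 0"
    and w: "\<forall>i<n. w i > 0"
    and r: "\<And>i j. i < n \<Longrightarrow> j < n \<Longrightarrow> r i j = A $$ (i, j) * w j / w i"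
    and M: "\<And>i. i < n \<Longrightarrow> M i = (\<Sum>j<n. r i j)"
    and sorted: "\<And>i j. i \<le> j \<Longrightarrow> j < n \<Longrightarrow> M j \<le> M i"
  defines "T \<equiv> Min {r i j | i j. i < n \<and> j < n \<and> i \<noteq> j}"
  defines "B \<equiv> (M (n - 1) - T + sqrt ((M (n - 1) + T)\<^sup>2
                 + 4 * T * (\<Sum>k<n - 1. M k - M (n - 1)))) / 2"
  shows "B \<le> spectral_radius (map_mat complex_of_real A) \<and>
    (spectral_radius (map_mat complex_of_real A) = B \<longleftrightarrow>
      (\<forall>i<n. \<forall>j<n. i \<noteq> j \<longrightarrow> (r i j - T) * (M j - M (n - 1)) = 0))"
proof -
  let ?m = "M (n - 1)"
  let ?exc = "\<lambda>i. \<Sum>j\<in>{..<n} - {i}. (r i j - T) * (M j - ?m)"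
  have n: "n > 0" using n2 by simp
  have rpos: "\<forall>i<n. \<forall>j<n. i \<noteq> j \<longrightarrow> r i j > 0" using pos w r by simp
  note T = offdiag_min[OF n2 rpos, folded T_def]
  have v: "M k - ?m \<ge> 0" if "k < n" for k using sorted[of k "n - 1"] that by simp
  have S: "(\<Sum>k<n. M k - ?m) = (\<Sum>k<n - 1. M k - ?m)"
  proof -
    obtain k where "n = Suc k" using n by (cases n) auto
    thus ?thesis by simp
  qed
  have "(\<Sum>j<n. r (n - 1) j) > 0"
    using r[of "n - 1" "n - 1"] diag rpos n by (intro row_sum_pos[OF n2]) auto
  hence m: "?m > 0" using M n by simp
  have "(\<Sum>k<n - 1. M k - ?m) \<ge> 0" using v by (intro sum_nonneg) simp
  note root = quadratic_bound_root[OF m T(1) this, folded B_def]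
  define z where "z k = 1 + (M k - ?m) / (B + T)" for k
  define y where "y k = w k * z k" for k
  have y: "\<forall>i<n. y i > 0" using w v root(1) unfolding y_def z_def
    by (auto intro!: mult_pos_pos add_pos_nonneg divide_nonneg_pos)
  have row: "(\<Sum>j<n. A $$ (i, j) * y j) = B * y i + w i * (?exc i / (B + T))" if i: "i < n" for i
  proof -
    have "(\<Sum>j<n. r i j * z j) = B * z i + ?exc i / (B + T)"
      using r[of i i] diag i M[OF i] root S unfolding z_def by (intro test_vector_identity) auto
    with w i r[of i] show ?thesis unfolding y_def by (intro diagonal_rescaling_row) auto
  qed
  have exc: "?exc i \<ge> 0" if "i < n" for i using T(2) v that by (intro sum_nonneg) auto
  have "B \<le> spectral_radius (map_mat complex_of_real A) \<and>
      (spectral_radius (map_mat complex_of_real A) = B \<longleftrightarrow> (\<forall>i<n. w i * (?exc i / (B + T)) = 0))"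
  proof (rule spectral_radius_of_nonneg_excess[OF A n _ pos y])
    show "\<forall>i<n. \<forall>j<n. 0 \<le> A $$ (i, j)"
      using diag pos by (metis order.strict_implies_order order_refl)
    show "\<forall>i<n. 0 \<le> w i * (?exc i / (B + T))"
      using w exc root(1) by (simp add: less_imp_le)
  qed (use row in simp)
  moreover have "w i * (?exc i / (B + T)) = 0 \<longleftrightarrow>
      (\<forall>j<n. i \<noteq> j \<longrightarrow> (r i j - T) * (M j - ?m) = 0)" if i: "i < n" for i
  proof -
    have "?exc i = 0 \<longleftrightarrow> (\<forall>j\<in>{..<n} - {i}. (r i j - T) * (M j - ?m) = 0)"
      using T(2) v i by (intro sum_nonneg_eq_0_iff) auto
    thus ?thesis using w i root(1) by auto
  qed
  ultimately show ?thesis by simp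
qed

text \<open>If all excesses vanish but M is not constant, let t - 1 be the last index with M above its
  minimum M_(n-1): every column l < t then attains T off the diagonal, and M is constant from t on.\<close>
lemma split_pattern_of_vanishing:
  fixes M :: "nat \<Rightarrow> real" and r :: "nat \<Rightarrow> nat \<Rightarrow> real"
  assumes sorted: "\<And>i j. i \<le> j \<Longrightarrow> j < n \<Longrightarrow> M j \<le> M i"
    and vanish: "\<forall>i<n. \<forall>j<n. i \<noteq> j \<longrightarrow> (r i j - T) * (M j - M (n - 1)) = 0"
    and nonconst: "j0 < n" "M j0 \<noteq> M (n - 1)"
  shows "\<exists>t. 1 \<le> t \<and> t \<le> n - 1 \<and>
           (\<forall>k<n. \<forall>l<t. k \<noteq> l \<longrightarrow> r k l = T) \<and>
           (\<forall>k. t \<le> k \<and> k < n \<longrightarrow> M k = M (n - 1))"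
proof -
  define J where "J = {j. j < n \<and> M j \<noteq> M (n - 1)}"
  have fin: "finite J" and ne: "J \<noteq> {}" using nonconst unfolding J_def by auto
  define t where "t = Suc (Max J)"
  have "Max J < n" "Max J \<noteq> n - 1" using Max_in[OF fin ne] unfolding J_def by auto
  hence t: "1 \<le> t" "t \<le> n - 1" unfolding t_def by auto
  have "M (Max J) \<noteq> M (n - 1)" using Max_in[OF fin ne] unfolding J_def by auto
  moreover have "M (n - 1) \<le> M (Max J)" using sorted[of "Max J" "n - 1"] t unfolding t_def by simp
  ultimately have top: "M (n - 1) < M (Max J)" by simp
  have above: "M (n - 1) < M l" if "l < t" for l
    using top sorted[of l "Max J"] that \<open>Max J < n\<close> unfolding t_def by simp
  have "r k l = T" if kl: "k < n" "l < t" "k \<noteq> l" for k l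
  proof -
    have "l < n" using kl t by simp
    hence "(r k l - T) * (M l - M (n - 1)) = 0" using vanish kl by blast
    thus ?thesis using above[OF kl(2)] by simp
  qed
  moreover have "M k = M (n - 1)" if k: "t \<le> k" "k < n" for k
  proof (rule ccontr)
    assume "M k \<noteq> M (n - 1)"
    hence "k \<le> Max J" using Max_ge[OF fin] k unfolding J_def by blast
    thus False using k unfolding t_def by simp
  qed
  ultimately show ?thesis using t by (intro exI[of _ t]) blast
qed

lemma equality_pattern_iff:
  fixes M :: "nat \<Rightarrow> real" and r :: "nat \<Rightarrow> nat \<Rightarrow> real"
  assumes n2: "n \<ge> 2" and sorted: "\<And>i j. i \<le> j \<Longrightarrow> j < n \<Longrightarrow> M j \<le> M i"
  shows "(\<forall>i<n. \<forall>j<n. i \<noteq> j \<longrightarrow> (r i j - T) * (M j - M (n - 1)) = 0) \<longleftrightarrow>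
      ((\<forall>k<n. M k = M 0) \<or>
      (\<exists>t. 1 \<le> t \<and> t \<le> n - 1 \<and>
         (\<forall>k<n. \<forall>l<t. k \<noteq> l \<longrightarrow> r k l = T) \<and>
         (\<forall>k. t \<le> k \<and> k < n \<longrightarrow> M k = M (n - 1))))"
  (is "?vanish \<longleftrightarrow> ?constant \<or> ?split")
proof
  assume vanish: ?vanish
  show "?constant \<or> ?split"
  proof (cases "\<exists>j<n. M j \<noteq> M (n - 1)")
    case False
    hence "M k = M (n - 1)" if "k < n" for k using that by blast
    hence "M k = M 0" if "k < n" for k using that n2 by (metis gr0I not_numeral_le_zero)
    thus ?thesis by blast
  next
    case True
    thus ?thesis using split_pattern_of_vanishing[OF sorted vanish] by blast
  qed
next
  assume "?constant \<or> ?split"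
  thus ?vanish
  proof
    assume const: ?constant
    have "M (n - 1) = M 0" using const[rule_format, of "n - 1"] n2 by simp
    hence flat: "M j = M (n - 1)" if "j < n" for j using const[rule_format, OF that] by simp
    show ?vanish
    proof (intro allI impI)
      fix i j assume "i < n" "j < n" "i \<noteq> j"
      show "(r i j - T) * (M j - M (n - 1)) = 0" using flat[OF \<open>j < n\<close>] by simp
    qed
  next
    assume ?split
    then obtain t where low: "\<forall>k<n. \<forall>l<t. k \<noteq> l \<longrightarrow> r k l = T"
      and high: "\<forall>k. t \<le> k \<and> k < n \<longrightarrow> M k = M (n - 1)" by blast
    show ?vanish
    proof (intro allI impI)
      fix i j assume "i < n" "j < n" "i \<noteq> j"
      thus "(r i j - T) * (M j - M (n - 1)) = 0"
        using low high[rule_format, of j] by (cases "j < t") auto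
    qed
  qed
qed

text \<open>The theorem: apply the abstract bound to the distance matrix with weights w_i = D_i^\<alpha>,
  for which r_ij = d_ij D_j^\<alpha>/D_i^\<alpha> and the row sums are the generalized average transmissions.\<close>
theorem theorem6:
  fixes n :: nat and E :: "nat \<Rightarrow> nat \<Rightarrow> bool" and \<alpha> :: real
  assumes conn: "connected_graph n E"
    and n2: "n \<ge> 2"
    and sorted: "\<And>i j. i \<le> j \<Longrightarrow> j < n \<Longrightarrow> gen_avg_trans n E \<alpha> j \<le> gen_avg_trans n E \<alpha> i"
  defines "M \<equiv> gen_avg_trans n E \<alpha>"
    and "r \<equiv> (\<lambda>i j. real (gdist n E i j) * transmission n E j powr \<alpha> / transmission n E i powr \<alpha>)"
  defines "T \<equiv> Min {r i j | i j. i < n \<and> j < n \<and> i \<noteq> j}"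
  defines "B \<equiv> (M (n - 1) - T + sqrt ((M (n - 1) + T)\<^sup>2
                 + 4 * T * (\<Sum>k<n - 1. M k - M (n - 1)))) / 2"
  shows "dist_spectral_radius n E \<ge> B \<and>
    (dist_spectral_radius n E = B \<longleftrightarrow>
      (\<forall>k<n. M k = M 0) \<or>
      (\<exists>t. 1 \<le> t \<and> t \<le> n - 1 \<and>
         (\<forall>k<n. \<forall>l<t. k \<noteq> l \<longrightarrow> r k l = T) \<and>
         (\<forall>k. t \<le> k \<and> k < n \<longrightarrow> M k = M (n - 1))))"
proof -
  define w where "w i = transmission n E i powr \<alpha>" for i
  let ?D = "dist_matrix n E"
  have D: "?D \<in> carrier_mat n n" unfolding dist_matrix_def by simp
  have Dij: "?D $$ (i, j) = real (gdist n E i j)" if "i < n" "j < n" for i j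
    using that unfolding dist_matrix_def by simp
  have w: "\<forall>i<n. w i > 0"
    using transmission_pos[OF conn n2] unfolding w_def by (metis powr_gt_zero order_less_irrefl)
  have diag: "\<forall>i<n. ?D $$ (i, i) = 0" using Dij gdist_self by simp
  have pos: "\<forall>i<n. \<forall>j<n. i \<noteq> j \<longrightarrow> ?D $$ (i, j) > 0"
    using Dij gdist_ge_1[OF conn] by (simp add: Suc_le_eq)
  have r: "r i j = ?D $$ (i, j) * w j / w i" if "i < n" "j < n" for i j
    using Dij[OF that] unfolding r_def w_def by simp
  have rowsum: "M i = (\<Sum>j<n. r i j)" for i
    unfolding M_def r_def gen_avg_trans_def by (simp add: sum_divide_distrib)
  note bound = weighted_row_sum_spectral_bound[OF D n2 diag pos w r rowsum sorted[folded M_def],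
      folded T_def, folded B_def, folded dist_spectral_radius_def]
  show ?thesis
    using bound equality_pattern_iff[OF n2 sorted[folded M_def], where r = r and T = T] by simp
qed

end
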